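(* Let $R:=\sqrt{D}$, let $x_{0}=R^{-1}\beta$, and let $p_{0}=q_{0}=0$. For every $k\in\mathbb{N}$, consider the routine \[ y_{k}=\operatorname{proj}_{R\mathcal{P}_{3}}(x_{k}+p_{k}),\quad p_{k+1}=x_{k}+p_{k}-y_{k},\quad x_{k+1}=\operatorname{proj}_{R\Delta_{N}}(y_{k}+q_{k}),\quad q_{k+1}=y_{k}+q_{k}-x_{k+1}. \] Then $(x_{k})$ converges to a point $q$ and $p=R^{-1}q$ is the solution to the problem \[ \min_{p\in\mathcal{P}} \tfrac{1}{2}p^{\top}Dp-p^{\top}\beta \] with $\mathcal{P}=\{p\in\Delta_{N}\,:\,\mu_{-}\leq \sum_{i=1}^{N}p_{i}\xi_{i}\leq\mu_{+}\}$.
   Context: $\mathcal{H}$ is a real Hilbert space, $\lambda>0$, $a_{i}\in\mathcal{H}\setminus\{0\}$ and $\xi_{i}\in\mathbb{R}$ for $i=1,\ldots,N$, $\mathbf{x}=(x_1,\ldots,x_N)\in\mathcal{H}^N$. $D:=\mathrm{diag}(\lambda\|a_{1}\|^{2},\ldots,\lambda\|a_{N}\|^{2})$ (a positive definite diagonal matrix) and $\beta:=(\langle a_{i},x_{i}\rangle+\xi_{i})_{i=1}^{N}\in\mathbb{R}^N$. $\Delta_{N}=\{p\in\mathbb{R}^{N}_{+}:\sum_{i=1}^{N}p_{i}=1\}$ is the probability simplex, $\mathcal{P}_{1}=\{p\in\mathbb{R}^{N}:\sum_{i=1}^N p_i=1\}$, $\mathcal{P}_{3}=\{p\in\mathbb{R}^{N}\,:\,\mu_{-}\leq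 \sum_{i=1}^{N}p_{i}\xi_{i}\leq\mu_{+}\}$ with $\mu_{-},\mu_{+}\in\mathbb{R}$ such that $\mathrm{int}(\mathbb{R}^{N}_{+})\cap\mathrm{int}(\mathcal{P}_{3})\cap\mathcal{P}_{1}\neq\emptyset$. $\operatorname{proj}_{C}$ denotes the Euclidean projection onto a set $C$, and $RC=\{Rp:p\in C\}$. *)

theory Defs
  imports "HOL-Analysis.Analysis"
begin

text \<open>Vectors in R^N are modelled as real^'n with a finite index type 'n (N = CARD('n)).
  The Euclidean projection onto a (closed convex) set C is the library's closest_point C.\<close>

definition prob_simplex :: "(real^'n) set" where
  "prob_simplex = {p. (\<forall>i. 0 \<le> p$i) \<and> (\<Sum>i\<in>UNIV. p$i) = 1}"

definition P1 :: "(real^'n) set" where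
  "P1 = {p. (\<Sum>i\<in>UNIV. p$i) = 1}"

definition P3 :: "('n \<Rightarrow> real) \<Rightarrow> real \<Rightarrow> real \<Rightarrow> (real^'n) set" where
  "P3 \<xi> mum mup = {p. mum \<le> (\<Sum>i\<in>UNIV. p$i * \<xi> i) \<and> (\<Sum>i\<in>UNIV. p$i * \<xi> i) \<le> mup}"

definition nonneg_orthant :: "(real^'n) set" where
  "nonneg_orthant = {p. \<forall>i. 0 \<le> p$i}"

definition diag_mult :: "('n \<Rightarrow> real) \<Rightarrow> real^'n \<Rightarrow> real^'n" where
  "diag_mult d p = (\<chi> i. d i * p$i)"

definition quad_obj :: "('n \<Rightarrow> real) \<Rightarrow> real^'n \<Rightarrow> real^'n \<Rightarrow> real" where
  "quad_obj d \<beta> p = (1/2) * (p \<bullet> diag_mult d p) - p \<bullet> \<beta>"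

end

theory Submission
  imports Defs
begin

(*
  The scaled iteration is Dykstra's alternating projection algorithm for A = R P3 and
  B = R Delta_N started at R^-1 beta, and completing the square turns the quadratic program
  into projecting R^-1 beta onto R (Delta_N \<inter> P3). So the theorem reduces to the
  Boyle-Dykstra theorem: Dykstra's iterates converge to the projection of x_0 onto A \<inter> B.

  For that, the energy |x_k|^2/2 + <p_k, y_(k-1)> + <q_k, x_k> decreases at each step by half
  the squared residuals, and by the variational inequalities of the two projections it is
  bounded below by |x_0|^2/2 - |z - x_0|^2/2 + |z - x_k|^2/2 for every z in A \<inter> B. Hence
  the residuals are square summable, and along a subsequence (k+1) |y_k - x_(k+1)|^2 tends to 0.
  Since |p_(k+1)|^2 <= (k+1) * (sum of residuals), the cross term <p_(k+1), y_k - x_(k+1)>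
  vanishes along it, so a cluster point l of the x_k identifies the limit of the energy as
  |x_0|^2/2 - |l - x_0|^2/2. Comparing with the lower bound gives both x_k --> l and the
  minimality of |l - x_0|.
*)

lemma summable_imp_liminf_Suc_mult_zero:
  fixes e :: "nat \<Rightarrow> real"
  assumes nonneg: "\<And>k. 0 \<le> e k" and summable: "summable e"
  obtains g where "filterlim g sequentially sequentially"
    and "(\<lambda>n. real (Suc (g n)) * e (g n)) \<longlonglongrightarrow> 0"
proof -
  have "\<exists>k\<ge>n. real (Suc k) * e k < 1 / real (Suc n)" for n
  proof (rule ccontr)
    assume "\<not> ?thesis"
    then have large: "1 / real (Suc n) \<le> real (Suc k) * e k" if "n \<le> k" for k
      using that by (meson not_less)
    have "summable (\<lambda>k. inverse (real (Suc k)))"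
    proof (rule summable_comparison_test'[where N=n])
      show "summable (\<lambda>k. real (Suc n) * e k)" using summable by (rule summable_mult)
      show "norm (inverse (real (Suc k))) \<le> real (Suc n) * e k" if "n \<le> k" for k
        using large[OF that] by (simp add: field_simps)
    qed
    then show False
      using summable_Suc_iff[of "\<lambda>k. inverse (real k)"] not_summable_harmonic[where 'a=real]
      by simp
  qed
  then obtain g where ge: "\<And>n. n \<le> g n"
    and small: "\<And>n. real (Suc (g n)) * e (g n) < 1 / real (Suc n)"
    by metis
  show thesis
  proof
    show "filterlim g sequentially sequentially"
      by (rule filterlim_at_top_mono[OF filterlim_ident]) (simp add: ge)
    show "(\<lambda>n. real (Suc (g n)) * e (g n)) \<longlonglongrightarrow> 0"
    proof (rule tendsto_sandwich[OF _ _ tendsto_const LIMSEQ_inverse_real_of_nat])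
      show "\<forall>\<^sub>F n in sequentially. 0 \<le> real (Suc (g n)) * e (g n)"
        using nonneg by simp
      show "\<forall>\<^sub>F n in sequentially. real (Suc (g n)) * e (g n) \<le> inverse (real (Suc n))"
        using small by (simp add: less_imp_le inverse_eq_divide)
    qed
  qed
qed

lemma norm_sum_power2_le:
  fixes v :: "nat \<Rightarrow> 'a::real_normed_vector"
  shows "(norm (\<Sum>i<n. v i))\<^sup>2 \<le> real n * (\<Sum>i<n. (norm (v i))\<^sup>2)"
proof -
  have "(norm (\<Sum>i<n. v i))\<^sup>2 \<le> (\<Sum>i<n. 1 * norm (v i))\<^sup>2"
    by (simp add: norm_sum power_mono)
  also have "\<dots> \<le> (\<Sum>i<n. 1\<^sup>2) * (\<Sum>i<n. (norm (v i))\<^sup>2)"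
    by (rule Cauchy_Schwarz_ineq_sum)
  finally show ?thesis by simp
qed

lemma tendsto_power2_norm_zero_iff:
  "((\<lambda>k. (norm (f k))\<^sup>2) \<longlongrightarrow> 0) F \<longleftrightarrow> (f \<longlongrightarrow> 0) F"
proof
  assume "((\<lambda>k. (norm (f k))\<^sup>2) \<longlongrightarrow> 0) F"
  then have "((\<lambda>k. sqrt ((norm (f k))\<^sup>2)) \<longlongrightarrow> sqrt 0) F"
    by (rule tendsto_real_sqrt)
  then show "(f \<longlongrightarrow> 0) F"
    by (simp add: tendsto_norm_zero_iff)
next
  assume "(f \<longlongrightarrow> 0) F"
  then show "((\<lambda>k. (norm (f k))\<^sup>2) \<longlongrightarrow> 0) F"
    using tendsto_power[OF tendsto_norm_zero, of f F 2] by simp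
qed

locale dykstra =
  fixes A B :: "'a::{real_inner, heine_borel} set" and x y p q :: "nat \<Rightarrow> 'a"
  assumes closed_A: "closed A" and convex_A: "convex A"
    and closed_B: "closed B" and convex_B: "convex B"
    and A_Int_B_nonempty: "A \<inter> B \<noteq> {}"
    and p_0: "p 0 = 0" and q_0: "q 0 = 0"
    and y_eq: "\<And>k. y k = closest_point A (x k + p k)"
    and p_Suc: "\<And>k. p (Suc k) = x k + p k - y k"
    and x_Suc: "\<And>k. x (Suc k) = closest_point B (y k + q k)"
    and q_Suc: "\<And>k. q (Suc k) = y k + q k - x (Suc k)"
begin

lemma x_p_q_sum: "x k + p k + q k = x 0"
  by (induction k) (simp_all add: p_0 q_0 p_Suc q_Suc algebra_simps)

lemma p_eq_sum: "p k = (\<Sum>i<k. x i - y i)"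
  by (induction k) (simp_all add: p_0 p_Suc)

lemma y_in_A: "y k \<in> A"
  using y_eq closest_point_in_set closed_A A_Int_B_nonempty by auto

lemma x_Suc_in_B: "x (Suc k) \<in> B"
  using x_Suc closest_point_in_set closed_B A_Int_B_nonempty by auto

text \<open>At \<open>k = 0\<close> the truncated index \<open>k - 1\<close> is harmless because \<open>p 0 = 0\<close>.\<close>

lemma p_normal_A: "a \<in> A \<Longrightarrow> inner (p k) (a - y (k - 1)) \<le> 0"
  using closest_point_dot[OF convex_A closed_A, of a "x (k - 1) + p (k - 1)"]
  by (cases k) (simp_all add: p_0 p_Suc y_eq)

lemma q_normal_B: "b \<in> B \<Longrightarrow> inner (q k) (b - x k) \<le> 0"
  using closest_point_dot[OF convex_B closed_B, of b "y (k - 1) + q (k - 1)"]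
  by (cases k) (simp_all add: q_0 q_Suc x_Suc)

definition energy :: "nat \<Rightarrow> real" where
  "energy k = (norm (x k))\<^sup>2 / 2 + inner (p k) (y (k - 1)) + inner (q k) (x k)"

lemma energy_0: "energy 0 = (norm (x 0))\<^sup>2 / 2"
  by (simp add: energy_def p_0 q_0)

lemma energy_Suc_le:
  "energy (Suc k) + (norm (x k - y k))\<^sup>2 / 2 + (norm (y k - x (Suc k)))\<^sup>2 / 2 \<le> energy k"
proof -
  define mid where "mid = (norm (y k))\<^sup>2 / 2 + inner (p (Suc k)) (y k) + inner (q k) (x k)"
  have "energy k = mid + (norm (x k - y k))\<^sup>2 / 2 - inner (p k) (y k - y (k - 1))"
    unfolding mid_def energy_def p_Suc
    by (simp add: power2_norm_eq_inner algebra_simps inner_commute add_divide_distrib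
        diff_divide_distrib)
  moreover have "mid = energy (Suc k) + (norm (y k - x (Suc k)))\<^sup>2 / 2 - inner (q k) (x (Suc k) - x k)"
    unfolding mid_def energy_def q_Suc
    by (simp add: power2_norm_eq_inner algebra_simps inner_commute add_divide_distrib
        diff_divide_distrib)
  moreover have "inner (p k) (y k - y (k - 1)) \<le> 0"
    using p_normal_A y_in_A by blast
  moreover have "inner (q k) (x (Suc k) - x k) \<le> 0"
    using q_normal_B x_Suc_in_B by blast
  ultimately show ?thesis by linarith
qed

lemma energy_eq:
  "energy k = (norm (x 0))\<^sup>2 / 2 - (norm (z - x 0))\<^sup>2 / 2 + (norm (z - x k))\<^sup>2 / 2
    + inner (p k) (y (k - 1) - z) + inner (q k) (x k - z)"
  unfolding energy_def x_p_q_sum[of k, symmetric]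
  by (simp add: power2_norm_eq_inner algebra_simps inner_commute add_divide_distrib
      diff_divide_distrib)

lemma energy_ge:
  assumes "z \<in> A \<inter> B"
  shows "(norm (x 0))\<^sup>2 / 2 - (norm (z - x 0))\<^sup>2 / 2 + (norm (z - x k))\<^sup>2 / 2 \<le> energy k"
proof -
  have "0 \<le> inner (p k) (y (k - 1) - z)" "0 \<le> inner (q k) (x k - z)"
    using p_normal_A[of z k] q_normal_B[of z k] assms by (simp_all add: inner_diff_right)
  then show ?thesis
    using energy_eq[of k z] by linarith
qed

lemma energy_plus_residuals_le:
  "energy k + (\<Sum>i<k. (norm (x i - y i))\<^sup>2 + (norm (y i - x (Suc i)))\<^sup>2) / 2 \<le> energy 0"
proof (induction k)
  case (Suc k)
  then show ?case
    using energy_Suc_le[of k] by (simp add: add_divide_distrib)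
qed simp

lemma summable_residuals:
  shows summable_x_y_residual: "summable (\<lambda>i. (norm (x i - y i))\<^sup>2)"
    and summable_y_x_residual: "summable (\<lambda>i. (norm (y i - x (Suc i)))\<^sup>2)"
proof -
  obtain z where z: "z \<in> A \<inter> B" using A_Int_B_nonempty by blast
  have "summable (\<lambda>i. (norm (x i - y i))\<^sup>2 + (norm (y i - x (Suc i)))\<^sup>2)"
  proof (rule bounded_imp_summable)
    show "(\<Sum>i\<le>k. (norm (x i - y i))\<^sup>2 + (norm (y i - x (Suc i)))\<^sup>2) \<le> (norm (z - x 0))\<^sup>2"
      for k
      using energy_plus_residuals_le[of "Suc k"] energy_ge[OF z, of "Suc k"] energy_0
        zero_le_power2[of "norm (z - x (Suc k))"]
      unfolding lessThan_Suc_atMost by linarith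
  qed simp
  then show "summable (\<lambda>i. (norm (x i - y i))\<^sup>2)" "summable (\<lambda>i. (norm (y i - x (Suc i)))\<^sup>2)"
    by (rule summable_comparison_test'[where N=0]; simp)+
qed

lemma energy_le_energy_0: "energy k \<le> energy 0"
proof -
  have "0 \<le> (\<Sum>i<k. (norm (x i - y i))\<^sup>2 + (norm (y i - x (Suc i)))\<^sup>2)"
    by (intro sum_nonneg) simp
  then show ?thesis
    using energy_plus_residuals_le[of k] by linarith
qed

lemma bounded_range_x: "bounded (range x)"
proof -
  obtain z where z: "z \<in> A \<inter> B" using A_Int_B_nonempty by blast
  have "(norm (z - x k))\<^sup>2 \<le> (norm (z - x 0))\<^sup>2" for k
    using energy_ge[OF z, of k] energy_le_energy_0[of k] energy_0 by linarith
  then have "dist z (x k) \<le> norm (z - x 0)" for k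
    unfolding dist_norm by (rule power2_le_imp_le) simp
  then show ?thesis
    unfolding bounded_def by (intro exI[of _ z] exI[of _ "norm (z - x 0)"]) auto
qed

lemma energy_convergent: "convergent energy"
proof -
  obtain z where z: "z \<in> A \<inter> B" using A_Int_B_nonempty by blast
  have "decseq energy"
  proof (rule decseq_SucI)
    show "energy (Suc k) \<le> energy k" for k
      using energy_Suc_le[of k] zero_le_power2[of "norm (x k - y k)"]
        zero_le_power2[of "norm (y k - x (Suc k))"] by linarith
  qed
  moreover have "(norm (x 0))\<^sup>2 / 2 - (norm (z - x 0))\<^sup>2 / 2 \<le> energy k" for k
    using energy_ge[OF z, of k] zero_le_power2[of "norm (z - x k)"] by linarith
  ultimately show ?thesis
    unfolding convergent_def by (blast intro: decseq_convergent)
qed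

lemma abs_inner_p_residual_le:
  "\<bar>inner (p (Suc k)) (y k - x (Suc k))\<bar>
    \<le> sqrt ((\<Sum>i. (norm (x i - y i))\<^sup>2) * (real (Suc k) * (norm (y k - x (Suc k)))\<^sup>2))"
proof -
  let ?S = "\<Sum>i. (norm (x i - y i))\<^sup>2"
  have "(norm (p (Suc k)))\<^sup>2 \<le> real (Suc k) * (\<Sum>i<Suc k. (norm (x i - y i))\<^sup>2)"
    unfolding p_eq_sum by (rule norm_sum_power2_le)
  also have "\<dots> \<le> real (Suc k) * ?S"
    by (intro mult_left_mono sum_le_suminf summable_x_y_residual) auto
  finally have p_bound: "(norm (p (Suc k)))\<^sup>2 \<le> real (Suc k) * ?S" .
  have "\<bar>inner (p (Suc k)) (y k - x (Suc k))\<bar>\<^sup>2 \<le> (norm (p (Suc k)) * norm (y k - x (Suc k)))\<^sup>2"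
    by (rule power_mono[OF Cauchy_Schwarz_ineq2]) simp
  also have "\<dots> \<le> real (Suc k) * ?S * (norm (y k - x (Suc k)))\<^sup>2"
    unfolding power_mult_distrib by (rule mult_right_mono[OF p_bound]) simp
  finally show ?thesis
    by (intro real_le_rsqrt) (simp add: algebra_simps)
qed

lemma energy_Suc_eq:
  "energy (Suc k) = (norm (x 0))\<^sup>2 / 2 - (norm (l - x 0))\<^sup>2 / 2 + (norm (l - x (Suc k)))\<^sup>2 / 2
    + inner (p (Suc k)) (y k - x (Suc k)) + inner (x 0 - x (Suc k)) (x (Suc k) - l)"
proof -
  have "q (Suc k) = x 0 - x (Suc k) - p (Suc k)"
    using x_p_q_sum[of "Suc k"] by (simp add: algebra_simps)
  then show ?thesis
    using energy_eq[of "Suc k" l] by (simp add: inner_diff_left inner_diff_right)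
qed

lemma energy_tendsto_along:
  assumes x_lim: "(\<lambda>j. x (Suc (u j))) \<longlonglongrightarrow> l"
    and residual_lim: "(\<lambda>j. real (Suc (u j)) * (norm (y (u j) - x (Suc (u j))))\<^sup>2) \<longlonglongrightarrow> 0"
  shows "(\<lambda>j. energy (Suc (u j))) \<longlonglongrightarrow> (norm (x 0))\<^sup>2 / 2 - (norm (l - x 0))\<^sup>2 / 2"
proof -
  have "(\<lambda>j. inner (p (Suc (u j))) (y (u j) - x (Suc (u j)))) \<longlonglongrightarrow> 0"
  proof (rule Lim_null_comparison)
    show "(\<lambda>j. sqrt ((\<Sum>i. (norm (x i - y i))\<^sup>2)
        * (real (Suc (u j)) * (norm (y (u j) - x (Suc (u j))))\<^sup>2))) \<longlonglongrightarrow> 0"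
      using tendsto_real_sqrt[OF tendsto_mult_left[OF residual_lim]] by simp
  qed (intro always_eventually allI, simp only: real_norm_def abs_inner_p_residual_le)
  then have "(\<lambda>j. (norm (x 0))\<^sup>2 / 2 - (norm (l - x 0))\<^sup>2 / 2 + (norm (l - x (Suc (u j))))\<^sup>2 / 2
      + inner (p (Suc (u j))) (y (u j) - x (Suc (u j))) + inner (x 0 - x (Suc (u j))) (x (Suc (u j)) - l))
      \<longlonglongrightarrow> (norm (x 0))\<^sup>2 / 2 - (norm (l - x 0))\<^sup>2 / 2 + (norm (l - l))\<^sup>2 / 2 + 0
        + inner (x 0 - l) (l - l)"
    by (intro tendsto_intros x_lim) simp_all
  then show ?thesis
    unfolding energy_Suc_eq[of _ l] by simp
qed

lemma energy_limit:
  obtains l where "l \<in> A \<inter> B"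
    and "energy \<longlonglongrightarrow> (norm (x 0))\<^sup>2 / 2 - (norm (l - x 0))\<^sup>2 / 2"
proof -
  let ?e = "\<lambda>k. (norm (y k - x (Suc k)))\<^sup>2"
  obtain L where L: "energy \<longlonglongrightarrow> L"
    using energy_convergent convergent_def by blast
  obtain g where g: "filterlim g sequentially sequentially"
    and g_small: "(\<lambda>n. real (Suc (g n)) * ?e (g n)) \<longlonglongrightarrow> 0"
    using summable_imp_liminf_Suc_mult_zero[OF _ summable_y_x_residual] by auto
  have "bounded (range (\<lambda>n. x (Suc (g n))))"
    by (rule bounded_subset[OF bounded_range_x]) auto
  then obtain h l where h: "strict_mono h" and x_lim: "((\<lambda>n. x (Suc (g n))) \<circ> h) \<longlonglongrightarrow> l"
    using bounded_imp_convergent_subsequence by blast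
  define u where "u = g \<circ> h"
  have x_u: "(\<lambda>j. x (Suc (u j))) \<longlonglongrightarrow> l"
    using x_lim by (simp add: u_def comp_def)
  have small_u: "(\<lambda>j. real (Suc (u j)) * ?e (u j)) \<longlonglongrightarrow> 0"
    using LIMSEQ_subseq_LIMSEQ[OF g_small h] by (simp add: u_def comp_def)
  have "(\<lambda>j. ?e (u j)) \<longlonglongrightarrow> 0"
  proof (rule tendsto_sandwich[OF _ _ tendsto_const small_u])
    show "\<forall>\<^sub>F j in sequentially. ?e (u j) \<le> real (Suc (u j)) * ?e (u j)"
      by (intro always_eventually allI) (simp add: mult_le_cancel_right1)
  qed simp
  then have "(\<lambda>j. y (u j) - x (Suc (u j))) \<longlonglongrightarrow> 0"
    by (rule tendsto_power2_norm_zero_iff[THEN iffD1])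
  from tendsto_add[OF this x_u] have y_u: "(\<lambda>j. y (u j)) \<longlonglongrightarrow> l"
    by simp
  have "l \<in> A \<inter> B"
    using closed_sequentially[OF closed_A _ y_u] closed_sequentially[OF closed_B _ x_u]
      y_in_A x_Suc_in_B by blast
  moreover have "filterlim (\<lambda>j. Suc (u j)) sequentially sequentially"
    unfolding u_def comp_def
    by (intro filterlim_compose[OF filterlim_Suc] filterlim_compose[OF g] filterlim_subseq h)
  then have "(\<lambda>j. energy (Suc (u j))) \<longlonglongrightarrow> L"
    by (rule filterlim_compose[OF L])
  with energy_tendsto_along[OF x_u small_u] have "L = (norm (x 0))\<^sup>2 / 2 - (norm (l - x 0))\<^sup>2 / 2"
    using LIMSEQ_unique by blast
  ultimately show thesis
    using L that by blast
qed

theorem tendsto_closest_point: "x \<longlonglongrightarrow> closest_point (A \<inter> B) (x 0)"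
proof -
  define E where "E l = (norm (x 0))\<^sup>2 / 2 - (norm (l - x 0))\<^sup>2 / 2" for l
  obtain l where l: "l \<in> A \<inter> B" and lim: "energy \<longlonglongrightarrow> E l"
    unfolding E_def by (rule energy_limit)
  have "(\<lambda>k. (norm (x k - l))\<^sup>2) \<longlonglongrightarrow> 0"
  proof (rule tendsto_sandwich[OF _ _ tendsto_const])
    show "\<forall>\<^sub>F k in sequentially. (norm (x k - l))\<^sup>2 \<le> 2 * (energy k - E l)"
    proof (intro always_eventually allI)
      show "(norm (x k - l))\<^sup>2 \<le> 2 * (energy k - E l)" for k
        using energy_ge[OF l, of k] unfolding E_def norm_minus_commute[of l "x k"] by (simp add: field_simps)
    qed
    show "(\<lambda>k. 2 * (energy k - E l)) \<longlonglongrightarrow> 0"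
      using tendsto_mult_left[OF LIM_zero[OF lim], of 2] by simp
  qed simp
  then have "x \<longlonglongrightarrow> l"
    by (simp add: tendsto_power2_norm_zero_iff LIM_zero_iff)
  moreover have "dist (x 0) l \<le> dist (x 0) z" if z: "z \<in> A \<inter> B" for z
  proof -
    have "E z \<le> energy k" for k
      using energy_ge[OF z, of k] zero_le_power2[of "norm (z - x k)"] unfolding E_def by linarith
    then have "E z \<le> E l"
      by (intro LIMSEQ_le_const[OF lim]) blast
    then have "(norm (l - x 0))\<^sup>2 \<le> (norm (z - x 0))\<^sup>2"
      by (simp add: E_def)
    then show ?thesis
      unfolding dist_norm norm_minus_commute[of "x 0"] by (rule power2_le_imp_le) simp
  qed
  ultimately show ?thesis
    using closest_point_unique[OF convex_Int[OF convex_A convex_B] closed_Int[OF closed_A closed_B] l]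
    by simp
qed

end

lemma diag_mult_inverse_left:
  "(\<And>i. r i \<noteq> 0) \<Longrightarrow> diag_mult (\<lambda>i. inverse (r i)) (diag_mult r v) = v"
  by (simp add: diag_mult_def vec_eq_iff)

lemma diag_mult_inverse_right:
  "(\<And>i. r i \<noteq> 0) \<Longrightarrow> diag_mult r (diag_mult (\<lambda>i. inverse (r i)) v) = v"
  by (simp add: diag_mult_def vec_eq_iff)

lemma linear_diag_mult: "linear (diag_mult r)"
  unfolding diag_mult_def by (intro linearI) (simp_all add: vec_eq_iff algebra_simps)

lemma inj_diag_mult: "(\<And>i. r i \<noteq> 0) \<Longrightarrow> inj (diag_mult r)"
  by (metis diag_mult_inverse_left injI)

lemma closed_diag_mult_image: "(\<And>i. r i \<noteq> 0) \<Longrightarrow> closed S \<Longrightarrow> closed (diag_mult r ` S)"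
  by (rule closed_injective_linear_image[OF _ linear_diag_mult inj_diag_mult])

lemma convex_diag_mult_image: "convex S \<Longrightarrow> convex (diag_mult r ` S)"
  by (rule convex_linear_image[OF linear_diag_mult])

lemma P3_eq_halfspaces:
  "P3 \<xi> mum mup = {v. mum \<le> inner (\<chi> i. \<xi> i) v} \<inter> {v. inner (\<chi> i. \<xi> i) v \<le> mup}"
  unfolding P3_def inner_vec_def by (auto simp: mult.commute)

lemma closed_P3: "closed (P3 \<xi> mum mup)"
  unfolding P3_eq_halfspaces by (intro closed_Int closed_halfspace_le closed_halfspace_ge)

lemma convex_P3: "convex (P3 \<xi> mum mup)"
  unfolding P3_eq_halfspaces by (intro convex_Int convex_halfspace_le convex_halfspace_ge)

lemma closed_prob_simplex: "closed prob_simplex"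
  unfolding prob_simplex_def
  by (intro closed_Collect_conj closed_Collect_all closed_Collect_le closed_Collect_eq
      continuous_intros)

lemma convex_prob_simplex: "convex prob_simplex"
  unfolding prob_simplex_def convex_def by (auto simp: sum.distrib sum_distrib_left[symmetric])

lemma prob_simplex_eq: "prob_simplex = nonneg_orthant \<inter> P1"
  unfolding prob_simplex_def nonneg_orthant_def P1_def by blast

lemma feasible_if_slater:
  "interior nonneg_orthant \<inter> interior (P3 \<xi> mum mup) \<inter> P1 \<noteq> {} \<Longrightarrow>
    prob_simplex \<inter> P3 \<xi> mum mup \<noteq> {}"
  using interior_subset[of nonneg_orthant] interior_subset[of "P3 \<xi> mum mup"]
  unfolding prob_simplex_eq by blast

lemma quad_obj_eq_dist:
  assumes "\<And>i. r i \<noteq> 0" and "\<And>i. d i = (r i)\<^sup>2"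
  shows "quad_obj d \<beta> v = (dist (diag_mult (\<lambda>i. inverse (r i)) \<beta>) (diag_mult r v))\<^sup>2 / 2
    - (norm (diag_mult (\<lambda>i. inverse (r i)) \<beta>))\<^sup>2 / 2"
proof -
  have "quad_obj d \<beta> v = (\<Sum>i\<in>UNIV. 1/2 * (v$i * (d i * v$i)) - v$i * \<beta>$i)"
    unfolding quad_obj_def diag_mult_def inner_vec_def by (simp add: sum_subtractf sum_distrib_left)
  also have "\<dots> = (\<Sum>i\<in>UNIV. ((inverse (r i) * \<beta>$i - r i * v$i)\<^sup>2 - (inverse (r i) * \<beta>$i)\<^sup>2) / 2)"
    using assms by (intro sum.cong refl) (simp add: power2_eq_square field_simps)
  also have "\<dots> = (dist (diag_mult (\<lambda>i. inverse (r i)) \<beta>) (diag_mult r v))\<^sup>2 / 2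
      - (norm (diag_mult (\<lambda>i. inverse (r i)) \<beta>))\<^sup>2 / 2"
    unfolding dist_norm diag_mult_def power2_norm_eq_inner inner_vec_def
    by (simp add: sum_subtractf diff_divide_distrib power2_eq_square sum_divide_distrib[symmetric])
  finally show ?thesis .
qed

lemma quad_obj_minimizer:
  fixes C :: "(real^'n::finite) set" and \<beta> :: "real^'n"
  assumes r: "\<And>i. r i \<noteq> 0" and d: "\<And>i. d i = (r i)\<^sup>2"
    and C: "closed C" "convex C" "C \<noteq> {}"
  defines "sol \<equiv> diag_mult (\<lambda>i. inverse (r i))
    (closest_point (diag_mult r ` C) (diag_mult (\<lambda>i. inverse (r i)) \<beta>))"
  shows "sol \<in> C"
    and "\<forall>p'\<in>C. quad_obj d \<beta> sol \<le> quad_obj d \<beta> p'"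
    and "\<forall>p'\<in>C. quad_obj d \<beta> p' \<le> quad_obj d \<beta> sol \<longrightarrow> p' = sol"
proof -
  define c where "c = diag_mult (\<lambda>i. inverse (r i)) \<beta>"
  define S where "S = diag_mult r ` C"
  define l where "l = closest_point S c"
  have sol: "sol = diag_mult (\<lambda>i. inverse (r i)) l"
    by (simp add: sol_def l_def S_def c_def)
  have S: "closed S" "convex S" "S \<noteq> {}"
    unfolding S_def using closed_diag_mult_image[of r, OF r C(1)] convex_diag_mult_image[OF C(2)] C(3)
    by auto
  have l_min: "dist c l \<le> dist c z" if "z \<in> S" for z
    unfolding l_def using closest_point_le[OF S(1) that] .
  have "l \<in> S"
    unfolding l_def using closest_point_in_set[OF S(1,3)] .
  then obtain c' where "c' \<in> C" and "l = diag_mult r c'"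
    unfolding S_def by blast
  then show "sol \<in> C"
    unfolding sol using diag_mult_inverse_left[of r c', OF r] by simp
  have R_sol: "diag_mult r sol = l"
    unfolding sol using diag_mult_inverse_right[of r l, OF r] .
  have obj: "quad_obj d \<beta> v = (dist c (diag_mult r v))\<^sup>2 / 2 - (norm c)\<^sup>2 / 2" for v
    unfolding c_def by (rule quad_obj_eq_dist[OF r d])
  show "\<forall>p'\<in>C. quad_obj d \<beta> sol \<le> quad_obj d \<beta> p'"
  proof
    fix p' assume "p' \<in> C"
    then have "dist c l \<le> dist c (diag_mult r p')"
      by (intro l_min) (simp add: S_def)
    then show "quad_obj d \<beta> sol \<le> quad_obj d \<beta> p'"
      unfolding obj R_sol by (intro diff_right_mono divide_right_mono power_mono) simp_all
  qed
  show "\<forall>p'\<in>C. quad_obj d \<beta> p' \<le> quad_obj d \<beta> sol \<longrightarrow> p' = sol"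
  proof (intro ballI impI)
    fix p' assume p': "p' \<in> C" and le: "quad_obj d \<beta> p' \<le> quad_obj d \<beta> sol"
    have "(dist c (diag_mult r p'))\<^sup>2 \<le> (dist c l)\<^sup>2"
      using le unfolding obj R_sol by simp
    then have "dist c (diag_mult r p') \<le> dist c l"
      by (rule power2_le_imp_le) simp
    with l_min have "\<forall>z\<in>S. dist c (diag_mult r p') \<le> dist c z"
      using order_trans by blast
    moreover have "diag_mult r p' \<in> S"
      using p' by (simp add: S_def)
    ultimately have "diag_mult r p' = diag_mult r sol"
      unfolding R_sol l_def by (intro closest_point_unique[OF S(2,1)])
    then show "p' = sol"
      by (rule injD[OF inj_diag_mult[of r, OF r]])
  qed
qed

theorem proposition2p2:
  fixes lam :: real
    and a :: "'n::finite \<Rightarrow> 'h::{real_inner, complete_space}"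
    and xx :: "'n \<Rightarrow> 'h"
    and \<xi> :: "'n \<Rightarrow> real"
    and mum mup :: real
    and d r :: "'n \<Rightarrow> real"
    and \<beta> :: "real^'n"
    and x y p q :: "nat \<Rightarrow> real^'n"
  assumes lam_pos: "lam > 0"
    and a_nz: "\<And>i. a i \<noteq> 0"
    and d_def: "\<And>i. d i = lam * (norm (a i))\<^sup>2"
    and beta_def: "\<And>i. \<beta>$i = inner (a i) (xx i) + \<xi> i"
    and slater: "interior nonneg_orthant \<inter> interior (P3 \<xi> mum mup) \<inter> P1 \<noteq> {}"
    and r_def: "\<And>i. r i = sqrt (d i)"
    and x0: "x 0 = diag_mult (\<lambda>i. inverse (r i)) \<beta>"
    and p0: "p 0 = 0"
    and q0: "q 0 = 0"
    and y_step: "\<And>k. y k = closest_point (diag_mult r ` P3 \<xi> mum mup) (x k + p k)"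
    and p_step: "\<And>k. p (Suc k) = x k + p k - y k"
    and x_step: "\<And>k. x (Suc k) = closest_point (diag_mult r ` prob_simplex) (y k + q k)"
    and q_step: "\<And>k. q (Suc k) = y k + q k - x (Suc k)"
  shows "\<exists>qlim. x \<longlonglongrightarrow> qlim \<and>
           (let sol = diag_mult (\<lambda>i. inverse (r i)) qlim in
              sol \<in> prob_simplex \<inter> P3 \<xi> mum mup \<and>
              (\<forall>p' \<in> prob_simplex \<inter> P3 \<xi> mum mup. quad_obj d \<beta> sol \<le> quad_obj d \<beta> p') \<and>
              (\<forall>p' \<in> prob_simplex \<inter> P3 \<xi> mum mup. quad_obj d \<beta> p' \<le> quad_obj d \<beta> sol \<longrightarrow> p' = sol))"
proof -
  have r_nz: "r i \<noteq> 0" for i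
    using lam_pos a_nz by (simp add: r_def d_def)
  have d_eq: "d i = (r i)\<^sup>2" for i
    using lam_pos by (simp add: r_def d_def)
  define C where "C = prob_simplex \<inter> P3 \<xi> mum mup"
  have C: "closed C" "convex C" "C \<noteq> {}"
    using feasible_if_slater[OF slater] unfolding C_def
    by (simp_all add: closed_Int closed_prob_simplex closed_P3 convex_Int convex_prob_simplex convex_P3)
  interpret dykstra "diag_mult r ` P3 \<xi> mum mup" "diag_mult r ` prob_simplex" x y p q
  proof
    show "closed (diag_mult r ` P3 \<xi> mum mup)" "closed (diag_mult r ` prob_simplex)"
      by (intro closed_diag_mult_image[of r, OF r_nz] closed_P3 closed_prob_simplex)+
    show "convex (diag_mult r ` P3 \<xi> mum mup)" "convex (diag_mult r ` prob_simplex)"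
      by (intro convex_diag_mult_image convex_P3 convex_prob_simplex)+
    show "diag_mult r ` P3 \<xi> mum mup \<inter> diag_mult r ` prob_simplex \<noteq> {}"
      using C(3) unfolding C_def by blast
  qed (fact p0 q0 y_step p_step x_step q_step)+
  have "diag_mult r ` P3 \<xi> mum mup \<inter> diag_mult r ` prob_simplex = diag_mult r ` C"
    unfolding C_def by (simp add: image_Int[OF inj_diag_mult[of r, OF r_nz]] Int_commute)
  then have "x \<longlonglongrightarrow> closest_point (diag_mult r ` C) (diag_mult (\<lambda>i. inverse (r i)) \<beta>)"
    using tendsto_closest_point x0 by simp
  then show ?thesis
    using quad_obj_minimizer[of r d C \<beta>, OF r_nz d_eq C]
    unfolding Let_def C_def by blast
qed

end
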